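(* Let $G_{12}$ be the graph with vertex set $\{1,\dots,12\}$ in which two distinct vertices are adjacent if and only if they both belong to one of the sets $\{1,4,7\}$, $\{2,4,5,6\}$, $\{2,4,6,7\}$, $\{2,4,6,9\}$, $\{2,4,9,12\}$, $\{2,5,8\}$, $\{2,6,7,11\}$, $\{2,11,12\}$, $\{3,6,9\}$, $\{4,5,6,10\}$, $\{4,10,12\}$, $\{6,10,11\}$, $\{10,11,12\}$. Then $G_{12}$ is not $\cup$-semi-weakly CIS, i.e., neither $G_{12}$ nor its complement is semi-weakly CIS.
   Context: A strong clique of a graph is a clique meeting every maximal stable set. A graph is semi-weakly CIS if it admits a family of strong cliques such that every two adjacent vertices lie together in some member. A graph is $\cup$-semi-weakly CIS if it or its complement is semi-weakly CIS. *)

theory Defs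
  imports Main
begin

text \<open>Finite simple graphs are given by a vertex set V and an adjacency
relation E (assumed symmetric and irreflexive on V by the constructions used).\<close>

definition stable_set :: "'a set \<Rightarrow> ('a \<Rightarrow> 'a \<Rightarrow> bool) \<Rightarrow> 'a set \<Rightarrow> bool" where
  "stable_set V E S \<longleftrightarrow> S \<subseteq> V \<and> (\<forall>u\<in>S. \<forall>v\<in>S. u \<noteq> v \<longrightarrow> \<not> E u v)"

definition maximal_stable_set :: "'a set \<Rightarrow> ('a \<Rightarrow> 'a \<Rightarrow> bool) \<Rightarrow> 'a set \<Rightarrow> bool" where
  "maximal_stable_set V E S \<longleftrightarrow> stable_set V E S \<and>
     (\<forall>T. stable_set V E T \<and> S \<subseteq> T \<longrightarrow> T = S)"

definition clique :: "'a set \<Rightarrow> ('a \<Rightarrow> 'a \<Rightarrow> bool) \<Rightarrow> 'a set \<Rightarrow> bool" where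
  "clique V E C \<longleftrightarrow> C \<subseteq> V \<and> (\<forall>u\<in>C. \<forall>v\<in>C. u \<noteq> v \<longrightarrow> E u v)"

definition strong_clique :: "'a set \<Rightarrow> ('a \<Rightarrow> 'a \<Rightarrow> bool) \<Rightarrow> 'a set \<Rightarrow> bool" where
  "strong_clique V E C \<longleftrightarrow> clique V E C \<and>
     (\<forall>S. maximal_stable_set V E S \<longrightarrow> C \<inter> S \<noteq> {})"

definition semi_weakly_CIS :: "'a set \<Rightarrow> ('a \<Rightarrow> 'a \<Rightarrow> bool) \<Rightarrow> bool" where
  "semi_weakly_CIS V E \<longleftrightarrow> (\<exists>\<F>. (\<forall>C\<in>\<F>. strong_clique V E C) \<and>
     (\<forall>u\<in>V. \<forall>v\<in>V. u \<noteq> v \<and> E u v \<longrightarrow> (\<exists>C\<in>\<F>. u \<in> C \<and> v \<in> C)))"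

definition compl_adj :: "('a \<Rightarrow> 'a \<Rightarrow> bool) \<Rightarrow> 'a \<Rightarrow> 'a \<Rightarrow> bool" where
  "compl_adj E u v \<longleftrightarrow> u \<noteq> v \<and> \<not> E u v"

definition union_semi_weakly_CIS :: "'a set \<Rightarrow> ('a \<Rightarrow> 'a \<Rightarrow> bool) \<Rightarrow> bool" where
  "union_semi_weakly_CIS V E \<longleftrightarrow> semi_weakly_CIS V E \<or> semi_weakly_CIS V (compl_adj E)"

definition G12_V :: "nat set" where "G12_V = {1..12}"

definition G12_sets :: "nat set list" where
  "G12_sets = [{1,4,7}, {2,4,5,6}, {2,4,6,7}, {2,4,6,9}, {2,4,9,12}, {2,5,8},
     {2,6,7,11}, {2,11,12}, {3,6,9}, {4,5,6,10}, {4,10,12}, {6,10,11}, {10,11,12}]"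

definition G12_E :: "nat \<Rightarrow> nat \<Rightarrow> bool" where
  "G12_E u v \<longleftrightarrow> u \<noteq> v \<and> (\<exists>X\<in>set G12_sets. u \<in> X \<and> v \<in> X)"

end

theory Submission
  imports Defs
begin

text \<open>A graph is not semi-weakly CIS as soon as some edge \<open>uv\<close> lies in no strong clique.
  This happens when some maximal stable set avoids \<open>u\<close>, \<open>v\<close> and all their common
  neighbours, since a clique through \<open>u\<close> and \<open>v\<close> consists of \<open>u\<close>, \<open>v\<close> and common
  neighbours. In \<open>G\<^sub>1\<^sub>2\<close> the edge \<open>{10,12}\<close> and the maximal stable set \<open>{5,7,9}\<close> witness
  this; in the complement, the edge \<open>{5,7}\<close> and the maximal stable set \<open>{6,10,11}\<close>.\<close>

lemma maximal_stable_setI: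
  assumes "stable_set V E S" and "\<forall>x\<in>V. x \<notin> S \<longrightarrow> (\<exists>y\<in>S. E x y)"
  shows "maximal_stable_set V E S"
  unfolding maximal_stable_set_def
proof (intro conjI allI impI)
  fix T assume T: "stable_set V E T \<and> S \<subseteq> T"
  show "T = S"
  proof (rule ccontr)
    assume "T \<noteq> S"
    with T obtain x where x: "x \<in> T" "x \<notin> S" by blast
    with T have "x \<in> V" unfolding stable_set_def by blast
    with x assms(2) obtain y where "y \<in> S" "E x y" by blast
    moreover have "y \<in> T" "x \<noteq> y" using T x \<open>y \<in> S\<close> by blast+
    ultimately show False using T x unfolding stable_set_def by blast
  qed
qed (fact assms(1))

lemma strong_clique_not_containing_edge:
  assumes "maximal_stable_set V E S" and "u \<notin> S" "v \<notin> S"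
    and "\<forall>x\<in>S. \<not> (E x u \<and> E x v)"
  shows "\<not> (strong_clique V E C \<and> u \<in> C \<and> v \<in> C)"
proof
  assume C: "strong_clique V E C \<and> u \<in> C \<and> v \<in> C"
  with assms(1) obtain x where "x \<in> C" "x \<in> S"
    unfolding strong_clique_def by blast
  moreover have "x \<noteq> u" "x \<noteq> v"
    using \<open>x \<in> S\<close> assms(2,3) by blast+
  ultimately have "E x u \<and> E x v"
    using C unfolding strong_clique_def clique_def by blast
  with \<open>x \<in> S\<close> assms(4) show False by blast
qed

lemma not_semi_weakly_CISI:
  assumes "u \<in> V" "v \<in> V" "u \<noteq> v" "E u v"
    and "\<And>C. \<not> (strong_clique V E C \<and> u \<in> C \<and> v \<in> C)"
  shows "\<not> semi_weakly_CIS V E"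
  using assms unfolding semi_weakly_CIS_def by blast

lemma G12_V_eq: "G12_V = {1,2,3,4,5,6,7,8,9,10,11,12}"
  unfolding G12_V_def by (auto; presburger)

lemma G12_E_iff:
  "G12_E u v \<longleftrightarrow> u \<noteq> v \<and> (\<exists>X\<in>{{1,4,7}, {2,4,5,6}, {2,4,6,7}, {2,4,6,9}, {2,4,9,12},
     {2,5,8}, {2,6,7,11}, {2,11,12}, {3,6,9}, {4,5,6,10}, {4,10,12}, {6,10,11}, {10,11,12}}.
     u \<in> X \<and> v \<in> X)"
  unfolding G12_E_def G12_sets_def by simp

lemma G12_maximal_stable_5_7_9: "maximal_stable_set G12_V G12_E {5,7,9}"
  by (rule maximal_stable_setI)
    (unfold stable_set_def G12_V_eq G12_E_iff ball_simps bex_simps; simp)+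

lemma G12_compl_maximal_stable_6_10_11:
  "maximal_stable_set G12_V (compl_adj G12_E) {6,10,11}"
  by (rule maximal_stable_setI)
    (unfold stable_set_def G12_V_eq G12_E_iff compl_adj_def ball_simps bex_simps; simp)+

theorem proposition35:
  shows "\<not> union_semi_weakly_CIS G12_V G12_E"
proof -
  have "\<not> semi_weakly_CIS G12_V G12_E"
  proof (rule not_semi_weakly_CISI[of 10 _ 12])
    show "\<not> (strong_clique G12_V G12_E C \<and> 10 \<in> C \<and> 12 \<in> C)" for C
      by (rule strong_clique_not_containing_edge[OF G12_maximal_stable_5_7_9])
        (simp_all add: G12_E_iff)
  qed (simp_all add: G12_V_eq G12_E_iff)
  moreover have "\<not> semi_weakly_CIS G12_V (compl_adj G12_E)"
  proof (rule not_semi_weakly_CISI[of 5 _ 7])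
    show "\<not> (strong_clique G12_V (compl_adj G12_E) C \<and> 5 \<in> C \<and> 7 \<in> C)" for C
      by (rule strong_clique_not_containing_edge[OF G12_compl_maximal_stable_6_10_11])
        (simp_all add: G12_E_iff compl_adj_def)
  qed (simp_all add: G12_V_eq G12_E_iff compl_adj_def)
  ultimately show ?thesis
    unfolding union_semi_weakly_CIS_def by blast
qed

end
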